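(* Let $d\ge2$, $k\in\overline{\mathbb{N}}_\ast^d$ and $\sigma$ a skew-bicharacter of $\mathbb{Z}^d_k$. Let $N,M\in\mathbb{N}_\ast$ with $N+M<\wedge k$, and let $\omega_{N,M}$ be the diagonal operator on $\ell^2(\mathbb{Z}^d)$ with $\omega_{N,M}e_n=w_{N,M}(n)e_n$ for all $n\in\mathbb{Z}^d$. Then $\omega_{N,M}$ is a finite rank operator and, for all $m\in I_k$, \[ \big\|[\omega_{N,M},\pi_{k,\sigma}(\delta_{q_k(m)})]\big\|\le \frac{|m|}{M}, \] the norm being the operator norm on $\ell^2(\mathbb{Z}^d)$.
   Context: $\mathbb{N}_\ast=\{2,3,\ldots\}$, $\overline{\mathbb{N}}_\ast=\mathbb{N}_\ast\cup\{\infty\}$. For $k\in\overline{\mathbb{N}}_\ast^d$: $k\mathbb{Z}^d=\prod_jk_j\mathbb{Z}$ with $\infty\mathbb{Z}=\{0\}$, $\mathbb{Z}^d_k=\mathbb{Z}^d/k\mathbb{Z}^d$, $q_k$ the canonical surjection. A skew-bicharacter of $\mathbb{Z}^d_k$ is a bicharacter $\sigma$ into the unit circle with $\sigma(n,m)=\overline{\sigma(m,n)}$, identified with its lift to $\mathbb{Z}^d$. On $\ell^2(\mathbb{Z}^d_k)$ (basis $e_m$) let $U^n_{k,\sigma}e_m=\sigma(m,n)e_{m-n}$ and $\rho_{k,\sigma}(f)=\sum_nf(n)U^n_{k,\sigma}$ for $f\in\ell^1(\mathbb{Z}^d_k)$; $C^\ast(\mathbb{Z}^d_k,\sigma)$ is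 the norm closure of the image. $\delta_p\in\ell^1(\mathbb{Z}^d_k)$ is the indicator of $\{p\}$. $I_k=\prod_{j=1}^d\{\lfloor\frac{1-k_j}{2}\rfloor,\ldots,\lfloor\frac{k_j-1}{2}\rfloor\}$ (the $j$-th factor is $\mathbb{Z}$ if $k_j=\infty$); $q_k$ restricts to a bijection $I_k\to\mathbb{Z}^d_k$ and $\{I_k+n:n\in k\mathbb{Z}^d\}$ partitions $\mathbb{Z}^d$. The representation $\pi_{k,\sigma}$ of $C^\ast(\mathbb{Z}^d_k,\sigma)$ on $\ell^2(\mathbb{Z}^d)$ (canonical basis $(e_n)_{n\in\mathbb{Z}^d}$) is defined blockwise: for each $n\in k\mathbb{Z}^d$, $\pi_{k,\sigma}(a)$ leaves $H_n=\overline{\mathrm{span}}\{e_j:j\in I_k+n\}$ invariant and acts on it as $W_n\rho_{k,\sigma}(a)W_n^\ast$, where $W_n:\ell^2(\mathbb{Z}^d_k)\to H_n$ is the unitary with $W_ne_{q_k(j)}=e_{j+n}$ for $j\in I_k$. It is a faithful unital *-representation. For $n\in\mathbb{Z}^d$, $|n|=\sum_j|n_j|$; $\wedge k=\min\{|n|:n\in\mathbb{Z}^d\setminus I_k\}\in\overline{\mathbb{N}}_\ast$ ($=\infty$ if $k=\infty^d$). For $N,M\in\mathbb{N}_\ast$, $w_{N,M}(n)=1$ if $|n|\le N$, $=\frac{M+N-|n|}{M}$ if $N\le|n|\le M+N$, and $0$ otherwise. *)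

theory Defs
  imports "HOL-Analysis.Analysis" "HOL-Library.Extended_Nat"
begin

text \<open>Points of Z^d are int ^ 'd (d = CARD('d)); k \<in> (N_* \<union> {\<infinity>})^d is enat ^ 'd.\<close>

definition absn :: "int ^ 'd \<Rightarrow> int" where
  "absn n = (\<Sum>j\<in>UNIV. \<bar>n $ j\<bar>)"

definition kgrid :: "enat ^ 'd \<Rightarrow> (int ^ 'd) set" where
  "kgrid k = {n. \<forall>j. (case k $ j of enat K \<Rightarrow> int K dvd n $ j | \<infinity> \<Rightarrow> n $ j = 0)}"

text \<open>The fundamental domain I_k (int div is floor division).\<close>
definition Ik :: "enat ^ 'd \<Rightarrow> (int ^ 'd) set" where
  "Ik k = {n. \<forall>j. (case k $ j of
        enat K \<Rightarrow> (1 - int K) div 2 \<le> n $ j \<and> n $ j \<le> (int K - 1) div 2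
      | \<infinity> \<Rightarrow> True)}"

definition kred :: "enat ^ 'd \<Rightarrow> int ^ 'd \<Rightarrow> int ^ 'd" where
  "kred k v = (THE j. j \<in> Ik k \<and> v - j \<in> kgrid k)"

definition wedge :: "enat ^ 'd \<Rightarrow> enat" where
  "wedge k = (INF n\<in>- Ik k. enat (nat (absn n)))"

definition w :: "nat \<Rightarrow> nat \<Rightarrow> int ^ 'd \<Rightarrow> real" where
  "w N M n = (if absn n \<le> int N then 1
              else if absn n \<le> int (M + N) then (real M + real N - real_of_int (absn n)) / real M
              else 0)"

text \<open>Skew-bicharacter of Z^d_k, identified with its lift to Z^d.\<close>
definition skew_bichar :: "enat ^ 'd \<Rightarrow> (int ^ 'd \<Rightarrow> int ^ 'd \<Rightarrow> complex) \<Rightarrow> bool" where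
  "skew_bichar k \<sigma> \<longleftrightarrow>
     (\<forall>a b. cmod (\<sigma> a b) = 1) \<and>
     (\<forall>a b c. \<sigma> (a + b) c = \<sigma> a c * \<sigma> b c) \<and>
     (\<forall>a b c. \<sigma> a (b + c) = \<sigma> a b * \<sigma> a c) \<and>
     (\<forall>a b. \<sigma> a b = cnj (\<sigma> b a)) \<and>
     (\<forall>a b. a \<in> kgrid k \<longrightarrow> \<sigma> a b = 1)"

definition l2 :: "('a \<Rightarrow> complex) set" where
  "l2 = {x. (\<lambda>n. (cmod (x n))\<^sup>2) summable_on UNIV}"

definition l2norm :: "('a \<Rightarrow> complex) \<Rightarrow> real" where
  "l2norm x = sqrt (\<Sum>\<^sub>\<infinity>n. (cmod (x n))\<^sup>2)"

definition l2_bounded :: "(('a \<Rightarrow> complex) \<Rightarrow> ('a \<Rightarrow> complex)) \<Rightarrow> bool" where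
  "l2_bounded T \<longleftrightarrow> (\<exists>B. \<forall>x\<in>l2. T x \<in> l2 \<and> l2norm (T x) \<le> B * l2norm x)"

definition l2_opnorm :: "(('a \<Rightarrow> complex) \<Rightarrow> ('a \<Rightarrow> complex)) \<Rightarrow> real" where
  "l2_opnorm T = Sup ((\<lambda>x. l2norm (T x)) ` {x\<in>l2. l2norm x \<le> 1})"

definition finite_rank :: "(('a \<Rightarrow> complex) \<Rightarrow> ('a \<Rightarrow> complex)) \<Rightarrow> bool" where
  "finite_rank T \<longleftrightarrow> (\<exists>F. finite F \<and> F \<subseteq> l2 \<and>
      (\<forall>x\<in>l2. \<exists>c. T x = (\<lambda>i. \<Sum>v\<in>F. c v * v i)))"

text \<open>Elements of l^2(Z^d_k) are represented by k-periodic functions on Z^d.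
  U^p e_m = sigma(m,p) e_(m-p); W_n e_(q_k j) = e_(j+n) for j in I_k.\<close>
definition Uop :: "(int ^ 'd \<Rightarrow> int ^ 'd \<Rightarrow> complex) \<Rightarrow> int ^ 'd
                    \<Rightarrow> (int ^ 'd \<Rightarrow> complex) \<Rightarrow> (int ^ 'd \<Rightarrow> complex)" where
  "Uop \<sigma> p f = (\<lambda>a. \<sigma> (a + p) p * f (a + p))"

definition Wop :: "enat ^ 'd \<Rightarrow> int ^ 'd \<Rightarrow> (int ^ 'd \<Rightarrow> complex) \<Rightarrow> (int ^ 'd \<Rightarrow> complex)" where
  "Wop k n f = (\<lambda>i. if i - n \<in> Ik k then f (i - n) else 0)"

definition Wstar :: "enat ^ 'd \<Rightarrow> int ^ 'd \<Rightarrow> (int ^ 'd \<Rightarrow> complex) \<Rightarrow> (int ^ 'd \<Rightarrow> complex)" where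
  "Wstar k n y = (\<lambda>v. y (kred k v + n))"

text \<open>pi_{k,sigma}(delta_{q_k p}) = pi_{k,sigma}(U^p): acts on each block H_n, n in k Z^d,
  as W_n U^p W_n^*; the block of i is n = i - kred k i.\<close>
definition pi_delta :: "enat ^ 'd \<Rightarrow> (int ^ 'd \<Rightarrow> int ^ 'd \<Rightarrow> complex) \<Rightarrow> int ^ 'd
                    \<Rightarrow> (int ^ 'd \<Rightarrow> complex) \<Rightarrow> (int ^ 'd \<Rightarrow> complex)" where
  "pi_delta k \<sigma> p y = (\<lambda>i. let n = i - kred k i in Wop k n (Uop \<sigma> p (Wstar k n y)) i)"

definition omega :: "nat \<Rightarrow> nat \<Rightarrow> (int ^ 'd \<Rightarrow> complex) \<Rightarrow> (int ^ 'd \<Rightarrow> complex)" where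
  "omega N M x = (\<lambda>n. complex_of_real (w N M n) * x n)"

end

theory Submission
  imports Defs
begin

text \<open>On each block \<open>I\<^sub>k + n\<close> the operator \<open>\<pi>\<^sub>k\<^sub>,\<^sub>\<sigma>(\<delta>\<^sub>m)\<close> reads off the coefficient at the point
  obtained by translating by \<open>m\<close> inside the block modulo \<open>k\<close>, up to a unimodular factor.
  Hence the commutator with the diagonal operator \<open>\<omega>\<^sub>N\<^sub>,\<^sub>M\<close> is a weighted composition with
  an injective index map \<open>J\<close>, with weights of modulus \<open>\<bar>w(i) - w(J i)\<bar>\<close>. The weight \<open>w\<close> is
  \<open>1/M\<close>-Lipschitz for \<open>|\<cdot>|\<close> and, because \<open>N + M < \<and>k\<close>, vanishes outside \<open>I\<^sub>k\<close>; when the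
  translation wraps around the block, both points lie at distance at most \<open>|m|\<close> from the
  region where \<open>w\<close> vanishes. So every weight is at most \<open>|m|/M\<close>.\<close>

subsection \<open>Reduction modulo \<open>k\<close>\<close>

lemma centered_residue_bounds:
  fixes K :: int assumes "K \<ge> 2"
  shows "(1 - K) div 2 + K - 1 \<le> (K - 1) div 2" "(K - 1) div 2 - (1 - K) div 2 \<le> K - 1"
  using assms by presburger+

lemma int_ge_2_if_enat_ge_2: "k \<ge> 2 \<Longrightarrow> k = enat K \<Longrightarrow> int K \<ge> 2"
  by (metis enat_ord_simps(1) numeral_eq_enat of_nat_numeral zle_int)

lemma kgrid_zero: "0 \<in> kgrid k"
  unfolding kgrid_def by (auto split: enat.splits)

lemma kgrid_diff: "a \<in> kgrid k \<Longrightarrow> b \<in> kgrid k \<Longrightarrow> a - b \<in> kgrid k"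
  unfolding kgrid_def
proof (intro CollectI allI)
  fix j assume "a \<in> {n. \<forall>j. case k $ j of enat K \<Rightarrow> int K dvd n $ j | \<infinity> \<Rightarrow> n $ j = 0}"
    "b \<in> {n. \<forall>j. case k $ j of enat K \<Rightarrow> int K dvd n $ j | \<infinity> \<Rightarrow> n $ j = 0}"
  then show "case k $ j of enat K \<Rightarrow> int K dvd (a - b) $ j | \<infinity> \<Rightarrow> (a - b) $ j = 0"
    by (cases "k $ j") (auto dest!: spec[of _ j])
qed

lemma kred_exists:
  assumes k2: "\<forall>j. k $ j \<ge> 2"
  shows "\<exists>a. a \<in> Ik k \<and> v - a \<in> kgrid k"
proof -
  define a where "a = (\<chi> j. case k $ j of
      enat K \<Rightarrow> v$j - int K * ((v$j - (1 - int K) div 2) div int K) | \<infinity> \<Rightarrow> v$j)"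
  have "a \<in> Ik k"
    unfolding Ik_def
  proof (intro CollectI allI)
    fix j
    show "case k $ j of enat K \<Rightarrow> (1 - int K) div 2 \<le> a $ j \<and> a $ j \<le> (int K - 1) div 2
                      | \<infinity> \<Rightarrow> True"
    proof (cases "k $ j")
      case (enat K)
      then have K2: "int K \<ge> 2" using k2 int_ge_2_if_enat_ge_2 by blast
      define lo where "lo = (1 - int K) div 2"
      have "a $ j = lo + (v$j - lo) mod int K"
        using enat unfolding a_def lo_def by (simp add: minus_div_mult_eq_mod[symmetric] algebra_simps)
      moreover have "0 \<le> (v$j - lo) mod int K" "(v$j - lo) mod int K < int K" using K2 by auto
      ultimately show ?thesis using centered_residue_bounds[OF K2] enat lo_def by auto
    qed simp
  qed
  moreover have "v - a \<in> kgrid k"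
    unfolding kgrid_def by (auto simp: a_def split: enat.splits)
  ultimately show ?thesis by blast
qed

lemma Ik_eq_if_diff_in_kgrid:
  assumes k2: "\<forall>j. k $ j \<ge> 2" and "a \<in> Ik k" "b \<in> Ik k" "a - b \<in> kgrid k"
  shows "a = b"
proof (rule vec_eq_iff[THEN iffD2], rule allI)
  fix j
  show "a $ j = b $ j"
  proof (cases "k $ j")
    case (enat K)
    then have K2: "int K \<ge> 2" using k2 int_ge_2_if_enat_ge_2 by blast
    from assms enat have r: "(1 - int K) div 2 \<le> a $ j" "a $ j \<le> (int K - 1) div 2"
        "(1 - int K) div 2 \<le> b $ j" "b $ j \<le> (int K - 1) div 2"
      and d: "int K dvd a$j - b$j"
      unfolding Ik_def kgrid_def by (auto dest!: spec[of _ j])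
    show ?thesis
    proof (rule ccontr)
      assume "a $ j \<noteq> b $ j"
      then have "int K \<le> \<bar>a$j - b$j\<bar>" using dvd_imp_le_int[OF _ d] by simp
      with r centered_residue_bounds[OF K2] show False by linarith
    qed
  next
    case infinity
    with assms show ?thesis unfolding kgrid_def by (auto dest!: spec[of _ j])
  qed
qed

lemma kred_unique:
  assumes "\<forall>j. k $ j \<ge> 2" "a \<in> Ik k" "v - a \<in> kgrid k" "b \<in> Ik k" "v - b \<in> kgrid k"
  shows "a = b"
  using Ik_eq_if_diff_in_kgrid[OF assms(1,2,4)] kgrid_diff[OF assms(5,3)] by simp

lemma
  assumes "\<forall>j. k $ j \<ge> 2"
  shows kred_in_Ik: "kred k v \<in> Ik k" and kred_diff_in_kgrid: "v - kred k v \<in> kgrid k"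
proof -
  have "\<exists>!a. a \<in> Ik k \<and> v - a \<in> kgrid k"
    using kred_exists[OF assms] kred_unique[OF assms] by blast
  from theI'[OF this] show "kred k v \<in> Ik k" "v - kred k v \<in> kgrid k"
    unfolding kred_def by auto
qed

lemma kred_eqI:
  assumes "\<forall>j. k $ j \<ge> 2" "a \<in> Ik k" "v - a \<in> kgrid k"
  shows "kred k v = a"
  using kred_unique[OF assms(1) kred_in_Ik[OF assms(1)] kred_diff_in_kgrid[OF assms(1)] assms(2,3)] .

lemma kred_Ik: "\<forall>j. k $ j \<ge> 2 \<Longrightarrow> a \<in> Ik k \<Longrightarrow> kred k a = a"
  by (rule kred_eqI) (auto simp: kgrid_zero)

lemma kred_add_kgrid:
  assumes "\<forall>j. k $ j \<ge> 2" "g \<in> kgrid k"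
  shows "kred k (v + g) = kred k v"
proof (rule kred_eqI[OF assms(1) kred_in_Ik[OF assms(1)]])
  show "v + g - kred k v \<in> kgrid k"
    using kgrid_diff[OF kred_diff_in_kgrid[OF assms(1), of v] kgrid_diff[OF kgrid_zero assms(2)]]
    by (simp add: algebra_simps)
qed

lemma diff_in_kgrid_if_kred_eq:
  assumes "\<forall>j. k $ j \<ge> 2" "kred k a = kred k b"
  shows "a - b \<in> kgrid k"
  using kgrid_diff[OF kred_diff_in_kgrid[OF assms(1), of a] kred_diff_in_kgrid[OF assms(1), of b]]
    assms(2) by simp

subsection \<open>The \<open>\<ell>\<^sup>1\<close>-norm on \<open>\<int>\<^sup>d\<close> and the weight \<open>w\<close>\<close>

lemma absn_nonneg: "0 \<le> absn n"
  unfolding absn_def by (simp add: sum_nonneg)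

lemma absn_triangle: "absn (a + b) \<le> absn a + absn b"
  unfolding absn_def by (simp add: sum.distrib[symmetric] sum_mono abs_triangle_ineq)

lemma absn_uminus: "absn (- a) = absn a"
  unfolding absn_def by simp

lemma abs_absn_diff_le: "\<bar>absn a - absn b\<bar> \<le> absn (a - b)"
  using absn_triangle[of "a - b" b] absn_triangle[of "b - a" a] absn_uminus[of "a - b"] by simp

lemma finite_absn_le: "finite {n :: int ^ 'd. absn n \<le> B}"
proof -
  have "n \<in> vec_lambda ` (PiE UNIV (\<lambda>_. {-B..B}))" if "absn n \<le> B" for n :: "int ^ 'd"
  proof (rule image_eqI)
    have "\<bar>n $ j\<bar> \<le> absn n" for j
      unfolding absn_def by (rule member_le_sum) auto
    then have "\<bar>n $ j\<bar> \<le> B" for j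
      using that by (rule order_trans)
    then have "n $ j \<in> {-B..B}" for j
      using abs_le_iff[of "n $ j" B] by auto
    then show "vec_nth n \<in> PiE UNIV (\<lambda>_. {-B..B})"
      by (simp add: PiE_iff)
  qed simp
  then have "{n :: int ^ 'd. absn n \<le> B} \<subseteq> vec_lambda ` (PiE UNIV (\<lambda>_. {-B..B}))"
    by blast
  moreover have "finite (PiE (UNIV :: 'd set) (\<lambda>_. {-B..B}))" by (intro finite_PiE) auto
  ultimately show ?thesis by (meson finite_imageI finite_subset)
qed

lemma absn_gt_if_not_in_Ik:
  assumes "enat (N + M) < wedge k" "v \<notin> Ik k"
  shows "int (N + M) < absn v"
proof -
  have "wedge k \<le> enat (nat (absn v))" unfolding wedge_def using assms(2) by (auto intro: INF_lower)
  with assms(1) have "N + M < nat (absn v)" by (metis enat_ord_simps(2) order_less_le_trans)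
  then show ?thesis by linarith
qed

lemma w_eq_clamp:
  assumes "M \<ge> 1"
  shows "w N M n = min 1 (max 0 ((real N + real M - real_of_int (absn n)) / real M))"
  using assms unfolding w_def by (auto simp: field_simps min_def max_def not_le)

lemma w_nonneg: "M \<ge> 1 \<Longrightarrow> 0 \<le> w N M n"
  by (simp add: w_eq_clamp)

lemma w_lipschitz:
  assumes "M \<ge> 1"
  shows "\<bar>w N M a - w N M b\<bar> \<le> real_of_int (absn (a - b)) / real M"
proof -
  have clamp: "\<bar>min 1 (max 0 x) - min 1 (max 0 y)\<bar> \<le> \<bar>x - y\<bar>" for x y :: real
    by (auto simp: min_def max_def abs_if)
  have "\<bar>w N M a - w N M b\<bar> \<le> \<bar>real_of_int (absn b - absn a)\<bar> / real M"
    using clamp[of "(real N + real M - real_of_int (absn a)) / real M"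
                   "(real N + real M - real_of_int (absn b)) / real M"]
    unfolding w_eq_clamp[OF assms] by (simp add: diff_divide_distrib[symmetric])
  also have "\<dots> \<le> real_of_int (absn (a - b)) / real M"
    using abs_absn_diff_le[of a b] by (intro divide_right_mono) (simp_all add: abs_minus_commute)
  finally show ?thesis .
qed

lemma w_le_if_far:
  assumes "M \<ge> 1" "int (N + M) < absn u"
  shows "w N M v \<le> real_of_int (absn (u - v)) / real M"
proof -
  have "real N + real M - real_of_int (absn v) \<le> real_of_int (absn (u - v))"
    using absn_triangle[of "u - v" v] assms(2) by simp
  then have "(real N + real M - real_of_int (absn v)) / real M \<le> real_of_int (absn (u - v)) / real M"
    by (rule divide_right_mono) simp
  moreover have "0 \<le> real_of_int (absn (u - v)) / real M"
    using absn_nonneg[of "u - v"] by simp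
  ultimately show ?thesis
    unfolding w_eq_clamp[OF assms(1)] by (simp add: min_le_iff_disj)
qed

lemma w_eq_0_if_not_in_Ik:
  "enat (N + M) < wedge k \<Longrightarrow> v \<notin> Ik k \<Longrightarrow> w N M v = 0"
  using absn_gt_if_not_in_Ik[of N M k v] unfolding w_def by simp

subsection \<open>\<open>\<pi>\<^sub>k\<^sub>,\<^sub>\<sigma>(\<delta>\<^sub>m)\<close> as a weighted composition\<close>

text \<open>Writing \<open>i = r + n\<close> with \<open>r \<in> I\<^sub>k\<close> and \<open>n \<in> k\<int>\<^sup>d\<close>, the point \<open>block_shift k m i\<close> is
  the representative of \<open>r + m\<close> in \<open>I\<^sub>k\<close>, moved back into the block of \<open>i\<close>.\<close>

definition block_shift :: "enat ^ 'd \<Rightarrow> int ^ 'd \<Rightarrow> int ^ 'd \<Rightarrow> int ^ 'd" where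
  "block_shift k m i = kred k (kred k i + m) + (i - kred k i)"

lemma pi_delta_apply:
  assumes "\<forall>j. k $ j \<ge> 2"
  shows "pi_delta k \<sigma> m y i = \<sigma> (kred k i + m) m * y (block_shift k m i)"
  using kred_in_Ik[OF assms, of i]
  unfolding pi_delta_def Wop_def Uop_def Wstar_def block_shift_def Let_def by simp

lemma kred_block_shift:
  assumes "\<forall>j. k $ j \<ge> 2"
  shows "kred k (block_shift k m i) = kred k (kred k i + m)"
  unfolding block_shift_def
  using kred_add_kgrid[OF assms kred_diff_in_kgrid[OF assms]] kred_Ik[OF assms kred_in_Ik[OF assms]]
  by simp

lemma inj_block_shift:
  assumes k2: "\<forall>j. k $ j \<ge> 2"
  shows "inj (block_shift k m)"
proof (rule injI)
  fix i i' assume eq: "block_shift k m i = block_shift k m i'"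
  then have shifted: "kred k (kred k i + m) = kred k (kred k i' + m)"
    using kred_block_shift[OF k2] by metis
  then have same_block: "i - kred k i = i' - kred k i'"
    using eq unfolding block_shift_def by simp
  have "kred k i - kred k i' \<in> kgrid k"
    using diff_in_kgrid_if_kred_eq[OF k2 shifted] by simp
  then have "kred k i = kred k i'"
    using Ik_eq_if_diff_in_kgrid[OF k2 kred_in_Ik[OF k2] kred_in_Ik[OF k2]] by blast
  with same_block show "i = i'" by (metis diff_add_cancel)
qed

lemma w_diff_block_shift_le:
  assumes k2: "\<forall>j. k $ j \<ge> 2" and M: "M \<ge> 1" and wd: "enat (N + M) < wedge k"
  shows "\<bar>w N M i - w N M (block_shift k m i)\<bar> \<le> real_of_int (absn m) / real M"
proof (cases "i \<in> Ik k")
  case iI: True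
  let ?j = "block_shift k m i"
  have j: "?j = kred k (i + m)"
    unfolding block_shift_def kred_Ik[OF k2 iI] by simp
  show ?thesis
  proof (cases "i + m \<in> Ik k")
    case True
    then show ?thesis
      using w_lipschitz[OF M, of N i "i + m"] absn_uminus[of m] j kred_Ik[OF k2] by simp
  next
    case False
    have far: "?j - m \<notin> Ik k"
    proof
      assume "?j - m \<in> Ik k"
      moreover have "i - (?j - m) \<in> kgrid k"
        using kred_diff_in_kgrid[OF k2, of "i + m"] j by (simp add: algebra_simps)
      ultimately have "i = ?j - m"
        using Ik_eq_if_diff_in_kgrid[OF k2 iI] by blast
      with False kred_in_Ik[OF k2] j show False by (metis diff_add_cancel)
    qed
    have "w N M ?j \<le> real_of_int (absn m) / real M"
      using w_le_if_far[OF M absn_gt_if_not_in_Ik[OF wd far], of ?j] absn_uminus[of m] by simp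
    moreover have "w N M i \<le> real_of_int (absn m) / real M"
      using w_le_if_far[OF M absn_gt_if_not_in_Ik[OF wd False], of i] by simp
    ultimately show ?thesis using w_nonneg[OF M, of N i] w_nonneg[OF M, of N ?j] by linarith
  qed
next
  case False
  then have "i \<noteq> kred k i" using kred_in_Ik[OF k2] by metis
  then have "block_shift k m i \<notin> Ik k"
    using kred_Ik[OF k2] kred_block_shift[OF k2] unfolding block_shift_def by force
  with False show ?thesis
    using w_eq_0_if_not_in_Ik[OF wd] absn_nonneg[of m] by simp
qed

lemma commutator_apply:
  assumes "\<forall>j. k $ j \<ge> 2"
  shows "(omega N M (pi_delta k \<sigma> m x) - pi_delta k \<sigma> m (omega N M x)) i
     = \<sigma> (kred k i + m) m * complex_of_real (w N M i - w N M (block_shift k m i))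
         * x (block_shift k m i)"
  unfolding omega_def fun_diff_def pi_delta_apply[OF assms] by (simp add: algebra_simps)

subsection \<open>Operators on \<open>\<ell>\<^sup>2\<close>\<close>

lemma l2_bound_weighted_reindex:
  fixes x :: "'b \<Rightarrow> complex" and y :: "'a \<Rightarrow> complex" and J :: "'a \<Rightarrow> 'b"
  assumes x: "x \<in> l2" and J: "inj J" and B: "0 \<le> B"
    and bound: "\<And>i. cmod (y i) \<le> B * cmod (x (J i))"
  shows "y \<in> l2 \<and> l2norm y \<le> B * l2norm x"
proof -
  define f where "f i = (cmod (x i))\<^sup>2" for i
  have f: "f summable_on UNIV" using x unfolding l2_def f_def by simp
  have f_range: "f summable_on range J" by (rule summable_on_subset_banach[OF f]) simp
  have fJ: "(f \<circ> J) summable_on UNIV" using f_range summable_on_reindex[OF J, of f] by simp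
  have BfJ: "(\<lambda>i. B\<^sup>2 * (f \<circ> J) i) summable_on UNIV" by (rule summable_on_cmult_right[OF fJ])
  have sq_bound: "(cmod (y i))\<^sup>2 \<le> B\<^sup>2 * (f \<circ> J) i" for i
    using power_mono[OF bound[of i], of 2] B by (simp add: f_def power_mult_distrib)
  have y: "(\<lambda>i. (cmod (y i))\<^sup>2) summable_on UNIV"
    by (rule summable_on_comparison_test[OF BfJ]) (use sq_bound in auto)
  have "(\<Sum>\<^sub>\<infinity>i. (cmod (y i))\<^sup>2) \<le> (\<Sum>\<^sub>\<infinity>i. B\<^sup>2 * (f \<circ> J) i)"
    by (rule infsum_mono[OF y BfJ sq_bound])
  also have "\<dots> = B\<^sup>2 * infsum f (range J)"
    using infsum_cmult_right[OF fJ, of "B\<^sup>2"] infsum_reindex[OF J, of f] by (simp add: comp_def)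
  also have "\<dots> \<le> B\<^sup>2 * infsum f UNIV"
    by (intro mult_left_mono infsum_mono2[OF f_range f]) (auto simp: f_def)
  finally have "l2norm y \<le> sqrt (B\<^sup>2 * infsum f UNIV)" unfolding l2norm_def by simp
  also have "\<dots> = B * l2norm x" unfolding l2norm_def f_def using B by (simp add: real_sqrt_mult)
  finally show ?thesis using y unfolding l2_def by simp
qed

lemma l2_opnorm_le:
  assumes "0 \<le> B" and "\<And>x. x \<in> l2 \<Longrightarrow> l2norm (T x) \<le> B * l2norm x"
  shows "l2_opnorm T \<le> B"
  unfolding l2_opnorm_def
proof (rule cSup_least)
  have "(\<lambda>_. 0) \<in> {x\<in>l2. l2norm x \<le> 1}" unfolding l2_def l2norm_def by simp
  then show "(\<lambda>x. l2norm (T x)) ` {x \<in> l2. l2norm x \<le> 1} \<noteq> {}" by blast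
next
  fix y assume "y \<in> (\<lambda>x. l2norm (T x)) ` {x \<in> l2. l2norm x \<le> 1}"
  then obtain x where "x \<in> l2" "l2norm x \<le> 1" "y = l2norm (T x)" by blast
  with assms show "y \<le> B" by (metis mult_left_le order_trans)
qed

lemma finite_rank_multiplier:
  fixes f :: "'a \<Rightarrow> complex"
  assumes "finite {n. f n \<noteq> 0}"
  shows "finite_rank (\<lambda>x n. f n * x n)"
proof -
  define S where "S = {n. f n \<noteq> 0}"
  define e where "e n i = (if i = n then 1 else 0 :: complex)" for n i :: 'a
  have inj: "inj_on e S"
  proof (rule inj_onI)
    fix a b assume "e a = e b"
    then have "e a a = e b a" by simp
    then show "a = b" by (simp add: e_def split: if_splits)
  qed
  have e_l2: "e n \<in> l2" for n
    using summable_on_cong_neutral[of "{n}" UNIV "\<lambda>i. (cmod (e n i))\<^sup>2"]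
    unfolding l2_def by (simp add: e_def)
  have expansion: "(\<lambda>n. f n * x n)
      = (\<lambda>i. \<Sum>v\<in>e ` S. (f (inv_into S e v) * x (inv_into S e v)) * v i)" for x
  proof
    fix i
    have "(\<Sum>v\<in>e ` S. (f (inv_into S e v) * x (inv_into S e v)) * v i)
        = (\<Sum>n\<in>S. (f n * x n) * (if i = n then 1 else 0))"
      by (simp add: sum.reindex[OF inj] inv_into_f_f[OF inj] e_def)
    also have "\<dots> = f i * x i"
      using assms unfolding S_def
      by (simp add: mult.commute[of "f _ * x _"] if_distrib sum.delta cong: if_cong)
    finally show "f i * x i = (\<Sum>v\<in>e ` S. (f (inv_into S e v) * x (inv_into S e v)) * v i)" ..
  qed
  show ?thesis
    unfolding finite_rank_def
  proof (intro exI[of _ "e ` S"] conjI ballI exI)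
    show "finite (e ` S)" using assms unfolding S_def by simp
    show "e ` S \<subseteq> l2" using e_l2 by blast
  qed (rule expansion)
qed

lemma finite_rank_omega: "finite_rank (omega N M)"
proof -
  have "{n. complex_of_real (w N M n) \<noteq> 0} \<subseteq> {n. absn n \<le> int (N + M)}"
    by (auto simp: w_def)
  then have "finite {n. complex_of_real (w N M n) \<noteq> 0}"
    using finite_absn_le finite_subset by blast
  then show ?thesis
    unfolding omega_def by (rule finite_rank_multiplier)
qed

theorem mainTheorem2:
  fixes k :: "enat ^ 'd" and \<sigma> :: "int ^ 'd \<Rightarrow> int ^ 'd \<Rightarrow> complex" and N M :: nat
  assumes "CARD('d) \<ge> 2"
    and "\<forall>j. k $ j \<ge> 2"
    and "skew_bichar k \<sigma>"
    and "N \<ge> 2" and "M \<ge> 2"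
    and "enat (N + M) < wedge k"
  shows "finite_rank (omega N M) \<and>
    (\<forall>m\<in>Ik k.
      l2_bounded (\<lambda>x. omega N M (pi_delta k \<sigma> m x) - pi_delta k \<sigma> m (omega N M x)) \<and>
      l2_opnorm (\<lambda>x. omega N M (pi_delta k \<sigma> m x) - pi_delta k \<sigma> m (omega N M x))
        \<le> real_of_int (absn m) / real M)"
proof (intro conjI ballI)
  show "finite_rank (omega N M)" by (rule finite_rank_omega)
next
  fix m :: "int ^ 'd"
  let ?C = "\<lambda>x. omega N M (pi_delta k \<sigma> m x) - pi_delta k \<sigma> m (omega N M x)"
  let ?B = "real_of_int (absn m) / real M"
  have M1: "M \<ge> 1" using assms(5) by simp
  have B0: "0 \<le> ?B" using absn_nonneg[of m] by simp
  have unimodular: "cmod (\<sigma> a b) = 1" for a b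
    using assms(3) unfolding skew_bichar_def by blast
  have pointwise: "cmod (?C x i) \<le> ?B * cmod (x (block_shift k m i))" for x i
    unfolding commutator_apply[OF assms(2)] norm_mult unimodular norm_of_real
    using mult_right_mono[OF w_diff_block_shift_le[OF assms(2) M1 assms(6), of i m] norm_ge_zero]
    by simp
  have bound: "?C x \<in> l2 \<and> l2norm (?C x) \<le> ?B * l2norm x" if "x \<in> l2" for x
    by (rule l2_bound_weighted_reindex[OF that inj_block_shift[OF assms(2), of m] B0 pointwise[of x]])
  then show "l2_bounded ?C" unfolding l2_bounded_def by blast
  show "l2_opnorm ?C \<le> ?B"
    using bound by (intro l2_opnorm_le[OF B0]) simp
qed

end
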